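(* Let $(S,\mathcal{A},\mu)$ be a complete, $\sigma$-finite measure space, $E$ a Köthe function space over $(S,\mathcal{A},\mu)$, and $X$ a locally almost square real Banach space such that the simple functions are dense in $E(X)$. Then $E(X)$ is locally almost square. In particular, if $p\in[1,\infty)$ and $X$ is locally almost square, then so is $L^p(\mu,X)$. Moreover, $L^\infty(\mu,X)$ is almost square (resp. locally almost square) whenever $X$ is almost square (resp. locally almost square).
   Context: A real Banach space $X$ is almost square (ASQ) if for all $n\in\mathbb{N}$ and $x_1,\dots,x_n\in S_X$ there is a sequence $(y_k)$ in $B_X$ with $\|y_k\|\to1$ and $\|x_i+y_k\|\to1$ for all $i=1,\dots,n$. $X$ is locally almost square (LASQ) if for every $x\in S_X$ there is a sequence $(y_k)$ in $B_X$ with $\|y_k\|\to1$ and $\|x\pm y_k\|\to1$. ($S_X$ unit sphere, $B_X$ closed unit ball.) Köthe function space over $(S,\mathcal{A},\mu)$: a Banach space $(E,\|\cdot\|_E)$ of real-valued measurable functions on $S$ (modulo a.e. equality) such that $\chi_A\in E$ whenever $\mu(A)<\infty$; every $f\in E$ is integrable over every set of finite measure; and if $g$ is measurable, $f\in E$ and $|g|\le|f|$ a.e., then $g\in E$ and $\|g\|_E\le\|f\|_E$. A function $f:S\to X$ is simple if it is constant on each of finitely many disjoint measurable sets of finite measure and zero outside their union; Bochner-measurable if it is an a.e. limit of simple functions. $E(X)$ is the space of Bochner-measurable $f:S\to X$ (modulo a.e.) with $\|f(\cdot)\|\in E$, normed by $\|f\|=\|\,\|f(\cdot)\|\,\|_E$.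 $L^p(\mu,X)$ denotes the Lebesgue–Bochner spaces. *)

theory Defs
  imports "HOL-Analysis.Analysis" "HOL-Library.Function_Algebras"
begin

text \<open>For function spaces the carrier consists of representatives and N is a seminorm
  whose kernel is the a.e.-null functions; the quotient norm of a class equals N of any
  representative, so these definitions coincide with ASQ/LASQ of the quotient space.\<close>

definition lasq_on :: "'v::{plus,minus} set \<Rightarrow> ('v \<Rightarrow> real) \<Rightarrow> bool" where
  "lasq_on V N \<longleftrightarrow>
     (\<forall>x\<in>V. N x = 1 \<longrightarrow>
        (\<exists>y::nat \<Rightarrow> 'v. (\<forall>k. y k \<in> V \<and> N (y k) \<le> 1) \<and>
            (\<lambda>k. N (y k)) \<longlonglongrightarrow> 1 \<and>
            (\<lambda>k. N (x + y k)) \<longlonglongrightarrow> 1 \<and>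
            (\<lambda>k. N (x - y k)) \<longlonglongrightarrow> 1))"

definition asq_on :: "'v::{plus,minus} set \<Rightarrow> ('v \<Rightarrow> real) \<Rightarrow> bool" where
  "asq_on V N \<longleftrightarrow>
     (\<forall>F. finite F \<and> F \<noteq> {} \<and> F \<subseteq> V \<and> (\<forall>x\<in>F. N x = 1) \<longrightarrow>
        (\<exists>y::nat \<Rightarrow> 'v. (\<forall>k. y k \<in> V \<and> N (y k) \<le> 1) \<and>
            (\<lambda>k. N (y k)) \<longlonglongrightarrow> 1 \<and>
            (\<forall>x\<in>F. (\<lambda>k. N (x + y k)) \<longlonglongrightarrow> 1)))"

abbreviation LASQ :: "'b::real_normed_vector itself \<Rightarrow> bool" where
  "LASQ (_::'b itself) \<equiv> lasq_on (UNIV::'b set) norm"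

abbreviation ASQ :: "'b::real_normed_vector itself \<Rightarrow> bool" where
  "ASQ (_::'b itself) \<equiv> asq_on (UNIV::'b set) norm"

definition simple_fun :: "'a measure \<Rightarrow> ('a \<Rightarrow> 'b::real_vector) \<Rightarrow> bool" where
  "simple_fun M f \<longleftrightarrow>
     (\<exists>(n::nat) (A::nat \<Rightarrow> 'a set) (c::nat \<Rightarrow> 'b).
        (\<forall>i<n. A i \<in> sets M \<and> emeasure M (A i) < \<infinity>) \<and>
        disjoint_family_on A {..<n} \<and>
        (\<forall>x\<in>space M. f x = (\<Sum>i<n. indicator (A i) x *\<^sub>R c i)))"

definition bochner_measurable :: "'a measure \<Rightarrow> ('a \<Rightarrow> 'b::real_normed_vector) \<Rightarrow> bool" where
  "bochner_measurable M f \<longleftrightarrow>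
     (\<exists>s::nat \<Rightarrow> 'a \<Rightarrow> 'b. (\<forall>n. simple_fun M (s n)) \<and>
        (AE x in M. (\<lambda>n. s n x) \<longlonglongrightarrow> f x))"

text \<open>E is a set of real-valued measurable functions (representatives), NE its norm;
  NE is a complete seminorm on the linear space E vanishing exactly on a.e.-zero functions,
  so that E modulo a.e. equality is a Banach space.\<close>

definition kothe_space :: "'a measure \<Rightarrow> ('a \<Rightarrow> real) set \<Rightarrow> (('a \<Rightarrow> real) \<Rightarrow> real) \<Rightarrow> bool" where
  "kothe_space M E NE \<longleftrightarrow>
     E \<subseteq> borel_measurable M \<and>
     \<comment> \<open>linear space with a seminorm\<close>
     0 \<in> E \<and>
     (\<forall>f\<in>E. \<forall>g\<in>E. f + g \<in> E \<and> NE (f + g) \<le> NE f + NE g) \<and>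
     (\<forall>f\<in>E. \<forall>c::real. (\<lambda>x. c * f x) \<in> E \<and> NE (\<lambda>x. c * f x) = \<bar>c\<bar> * NE f) \<and>
     (\<forall>f\<in>E. 0 \<le> NE f) \<and>
     \<comment> \<open>norm zero exactly on the zero class\<close>
     (\<forall>f\<in>E. NE f = 0 \<longleftrightarrow> (AE x in M. f x = 0)) \<and>
     \<comment> \<open>completeness\<close>
     (\<forall>F::nat \<Rightarrow> 'a \<Rightarrow> real. (\<forall>n. F n \<in> E) \<and>
          (\<forall>e>0. \<exists>N. \<forall>m\<ge>N. \<forall>n\<ge>N. NE (F m - F n) < e) \<longrightarrow>
          (\<exists>g\<in>E. (\<lambda>n. NE (F n - g)) \<longlonglongrightarrow> 0)) \<and>
     \<comment> \<open>characteristic functions of sets of finite measure\<close>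
     (\<forall>A\<in>sets M. emeasure M A < \<infinity> \<longrightarrow> indicator A \<in> E) \<and>
     \<comment> \<open>integrability over sets of finite measure\<close>
     (\<forall>f\<in>E. \<forall>A\<in>sets M. emeasure M A < \<infinity> \<longrightarrow> set_integrable M A f) \<and>
     \<comment> \<open>ideal (lattice) property\<close>
     (\<forall>f\<in>E. \<forall>g\<in>borel_measurable M. (AE x in M. \<bar>g x\<bar> \<le> \<bar>f x\<bar>) \<longrightarrow> g \<in> E \<and> NE g \<le> NE f)"

definition EX_space :: "'a measure \<Rightarrow> ('a \<Rightarrow> real) set \<Rightarrow> ('a \<Rightarrow> 'b::real_normed_vector) set" where
  "EX_space M E = {f. bochner_measurable M f \<and> (\<lambda>x. norm (f x)) \<in> E}"

definition EX_norm :: "(('a \<Rightarrow> real) \<Rightarrow> real) \<Rightarrow> ('a \<Rightarrow> 'b::real_normed_vector) \<Rightarrow> real" where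
  "EX_norm NE f = NE (\<lambda>x. norm (f x))"

definition simple_dense :: "'a measure \<Rightarrow> ('a \<Rightarrow> real) set \<Rightarrow> (('a \<Rightarrow> real) \<Rightarrow> real) \<Rightarrow> 'b::real_normed_vector itself \<Rightarrow> bool" where
  "simple_dense M E NE (_::'b itself) \<longleftrightarrow>
     (\<forall>f\<in>(EX_space M E :: ('a \<Rightarrow> 'b) set). \<forall>e>0.
        \<exists>s. simple_fun M s \<and> EX_norm NE (f - s) < e)"

definition Lp_space :: "'a measure \<Rightarrow> real \<Rightarrow> ('a \<Rightarrow> 'b::real_normed_vector) set" where
  "Lp_space M p = {f. bochner_measurable M f \<and> integrable M (\<lambda>x. norm (f x) powr p)}"

definition Lp_norm :: "'a measure \<Rightarrow> real \<Rightarrow> ('a \<Rightarrow> 'b::real_normed_vector) \<Rightarrow> real" where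
  "Lp_norm M p f = (\<integral>x. norm (f x) powr p \<partial>M) powr (1 / p)"

definition Linf_space :: "'a measure \<Rightarrow> ('a \<Rightarrow> 'b::real_normed_vector) set" where
  "Linf_space M = {f. bochner_measurable M f \<and> (\<exists>C. AE x in M. norm (f x) \<le> C)}"

definition Linf_norm :: "'a measure \<Rightarrow> ('a \<Rightarrow> 'b::real_normed_vector) \<Rightarrow> real" where
  "Linf_norm M f = Inf {C::real. 0 \<le> C \<and> (AE x in M. norm (f x) \<le> C)}"

end

theory Submission
  imports Defs
begin

text \<open>
  Let \<open>x\<close> be a norm-one element of one of the function spaces. At almost every point \<open>t\<close>
  with \<open>x t \<noteq> 0\<close> pick a vector \<open>y\<close> that is almost square to the direction of \<open>x t\<close> and set
  \<open>g t = \<parallel>x t\<parallel> y\<close>; then \<open>\<parallel>g t\<parallel>\<close> and \<open>\<parallel>x t \<plusminus> g t\<parallel>\<close> are pointwise between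
  \<open>(1 - \<epsilon>) \<parallel>x t\<parallel>\<close> and \<open>(1 + \<epsilon>) \<parallel>x t\<parallel>\<close>. In each of the spaces \<open>E(X)\<close>, \<open>L\<^sup>p(\<mu>, X)\<close>
  and \<open>L\<^sup>\<infinity>(\<mu>, X)\<close> the norm is monotone and positively homogeneous under such pointwise
  comparisons (the space is solid), so \<open>g\<close> witnesses local almost squareness up to \<open>\<epsilon>\<close>.
  The difficulty is to make the choice measurable: \<open>y\<close> is chosen as a function of the value
  of the first simple approximant \<open>s\<^sub>n(t)\<close> that is relatively \<open>\<epsilon>\<close>-close to \<open>x t\<close>, whose direction
  is then close to that of \<open>x t\<close>. Bochner measurability already provides these pointwise
  approximants.

  For \<open>L\<^sup>\<infinity>\<close> and almost squareness the same selection, applied simultaneously to finitely many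
  functions with an absolute error, gives \<open>g\<close> with \<open>\<parallel>g t\<parallel> \<approx> 1\<close>, \<open>\<parallel>x\<^sub>i t + g t\<parallel> \<le> 1 + \<epsilon>\<close>
  a.e., and \<open>\<parallel>x\<^sub>i t + g t\<parallel> \<ge> 1 - \<epsilon>\<close> wherever \<open>\<parallel>x\<^sub>i t\<parallel>\<close> is close to its essential supremum;
  here \<open>\<sigma>\<close>-finiteness makes the constants Bochner measurable.
\<close>

section \<open>Simple functions and Bochner measurability\<close>

lemma simple_funD:
  fixes u :: "'a \<Rightarrow> 'b::real_normed_vector"
  assumes "simple_fun M u"
  shows "simple_function M u"
    and "\<exists>B\<in>sets M. emeasure M B < \<infinity> \<and> (\<forall>t\<in>space M - B. u t = 0)"
proof -
  obtain n :: nat and A c where A: "\<forall>i<n. A i \<in> sets M \<and> emeasure M (A i) < \<infinity>"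
    and u: "\<forall>x\<in>space M. u x = (\<Sum>i<n. indicator (A i) x *\<^sub>R c i)"
    using assms unfolding simple_fun_def by blast
  have "simple_function M (\<lambda>x. \<Sum>i<n. indicator (A i) x *\<^sub>R c i)"
  proof (rule simple_function_sum)
    fix i assume "i \<in> {..<n}"
    then have "A i \<in> sets M" using A by blast
    then show "simple_function M (\<lambda>x. indicator (A i) x *\<^sub>R c i)"
      by (rule simple_function_scaleR[OF simple_function_indicator simple_function_const])
  qed
  moreover have "simple_function M u \<longleftrightarrow> simple_function M (\<lambda>x. \<Sum>i<n. indicator (A i) x *\<^sub>R c i)"
    using u by (intro simple_function_cong) blast
  ultimately show "simple_function M u" by blast
  have "emeasure M (\<Union>i<n. A i) \<le> (\<Sum>i<n. emeasure M (A i))"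
    using A by (intro emeasure_subadditive_finite) auto
  also have "\<dots> < \<infinity>" using A by (simp add: ennreal_sum_less_top)
  finally show "\<exists>B\<in>sets M. emeasure M B < \<infinity> \<and> (\<forall>t\<in>space M - B. u t = 0)"
    using A u by (intro bexI[of _ "\<Union>i<n. A i"]) (auto simp: indicator_def)
qed

lemma simple_funI:
  fixes u :: "'a \<Rightarrow> 'b::real_normed_vector"
  assumes u: "simple_function M u" and B: "B \<in> sets M" "emeasure M B < \<infinity>"
    and supp: "\<forall>t\<in>space M - B. u t = 0"
  shows "simple_fun M u"
proof -
  define V where "V = u ` space M - {0}"
  have "finite V" using u by (simp add: V_def simple_functionD(1))
  then obtain c where c: "bij_betw c {..<card V} V"
    using ex_bij_betw_nat_finite by (metis atLeast0LessThan)
  define A where "A v = u -` {v} \<inter> space M" for v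
  have A: "A (c i) \<in> sets M \<and> emeasure M (A (c i)) < \<infinity>" if "i < card V" for i
  proof
    show "A (c i) \<in> sets M" using u by (simp add: A_def simple_functionD(2))
    have "c i \<in> V" using c that by (auto simp: bij_betw_def)
    then have "A (c i) \<subseteq> B" using supp by (auto simp: A_def V_def) (metis DiffI)
    then show "emeasure M (A (c i)) < \<infinity>"
      using B emeasure_mono le_less_trans by metis
  qed
  have "disjoint_family_on (A \<circ> c) {..<card V}"
    using c by (auto simp: disjoint_family_on_def A_def bij_betw_def inj_on_def)
  moreover have "u x = (\<Sum>i<card V. indicator (A (c i)) x *\<^sub>R c i)" if x: "x \<in> space M" for x
  proof -
    have "(\<Sum>i<card V. indicator (A (c i)) x *\<^sub>R c i) = (\<Sum>v\<in>V. indicator (A v) x *\<^sub>R v)"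
      using sum.reindex_bij_betw[OF c, of "\<lambda>v. indicator (A v) x *\<^sub>R v"] .
    also have "\<dots> = (\<Sum>v\<in>V. if v = u x then v else 0)"
      using x by (intro sum.cong) (auto simp: A_def)
    also have "\<dots> = u x" using x \<open>finite V\<close> by (auto simp: V_def)
    finally show ?thesis by simp
  qed
  ultimately show ?thesis
    unfolding simple_fun_def using A by (intro exI[of _ "card V"] exI[of _ "A \<circ> c"] exI[of _ c]) auto
qed

lemma bochner_measurable_compose2:
  fixes f :: "'a \<Rightarrow> 'b::real_normed_vector" and g :: "'a \<Rightarrow> 'c::real_normed_vector"
    and \<phi> :: "'b \<Rightarrow> 'c \<Rightarrow> 'd::real_normed_vector"
  assumes f: "bochner_measurable M f" and g: "bochner_measurable M g" and "\<phi> 0 0 = 0"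
    and \<phi>: "\<And>X Y a b. X \<longlonglongrightarrow> a \<Longrightarrow> Y \<longlonglongrightarrow> b \<Longrightarrow> (\<lambda>n. \<phi> (X n) (Y n)) \<longlonglongrightarrow> \<phi> a b"
  shows "bochner_measurable M (\<lambda>t. \<phi> (f t) (g t))"
proof -
  obtain s where s: "\<forall>n. simple_fun M (s n)" and s_lim: "AE t in M. (\<lambda>n. s n t) \<longlonglongrightarrow> f t"
    using f unfolding bochner_measurable_def by blast
  obtain r where r: "\<forall>n. simple_fun M (r n)" and r_lim: "AE t in M. (\<lambda>n. r n t) \<longlonglongrightarrow> g t"
    using g unfolding bochner_measurable_def by blast
  have "simple_fun M (\<lambda>t. \<phi> (s n t) (r n t))" for n
  proof -
    obtain B1 where B1: "B1 \<in> sets M" "emeasure M B1 < \<infinity>" "\<forall>t\<in>space M - B1. s n t = 0"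
      using simple_funD(2) s by blast
    obtain B2 where B2: "B2 \<in> sets M" "emeasure M B2 < \<infinity>" "\<forall>t\<in>space M - B2. r n t = 0"
      using simple_funD(2) r by blast
    have "simple_function M (s n)" "simple_function M (r n)"
      using s r simple_funD(1) by blast+
    then have "simple_function M (\<lambda>t. \<phi> (s n t) (r n t))"
      by (rule simple_function_compose2)
    moreover have "emeasure M (B1 \<union> B2) < \<infinity>"
      using B1 B2 emeasure_subadditive[of B1 M B2] by (simp add: le_less_trans)
    ultimately show ?thesis
      using B1 B2 \<open>\<phi> 0 0 = 0\<close> by (intro simple_funI[where B="B1 \<union> B2"]) auto
  qed
  moreover have "AE t in M. (\<lambda>n. \<phi> (s n t) (r n t)) \<longlonglongrightarrow> \<phi> (f t) (g t)"
    using s_lim r_lim by eventually_elim (rule \<phi>)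
  ultimately show ?thesis
    unfolding bochner_measurable_def by (intro exI[of _ "\<lambda>n t. \<phi> (s n t) (r n t)"]) blast
qed

lemma bochner_measurable_add:
  fixes f g :: "'a \<Rightarrow> 'b::real_normed_vector"
  shows "bochner_measurable M f \<Longrightarrow> bochner_measurable M g \<Longrightarrow> bochner_measurable M (\<lambda>t. f t + g t)"
  by (rule bochner_measurable_compose2[where \<phi>="(+)"]) (auto intro: tendsto_add)

lemma bochner_measurable_diff:
  fixes f g :: "'a \<Rightarrow> 'b::real_normed_vector"
  shows "bochner_measurable M f \<Longrightarrow> bochner_measurable M g \<Longrightarrow> bochner_measurable M (\<lambda>t. f t - g t)"
  by (rule bochner_measurable_compose2[where \<phi>="(-)"]) (auto intro: tendsto_diff)

lemma bochner_measurable_norm: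
  fixes f :: "'a \<Rightarrow> 'b::real_normed_vector"
  shows "bochner_measurable M f \<Longrightarrow> bochner_measurable M (\<lambda>t. norm (f t))"
  by (rule bochner_measurable_compose2[where \<phi>="\<lambda>a b. norm a"]) (auto intro: tendsto_norm)

lemma bochner_measurable_const:
  fixes M :: "'a measure"
  assumes "sigma_finite_measure M"
  shows "bochner_measurable M (\<lambda>t. c :: 'b::real_normed_vector)"
proof -
  obtain A :: "nat \<Rightarrow> 'a set" where A: "range A \<subseteq> sets M" "(\<Union>i. A i) = space M"
    "\<And>i. emeasure M (A i) \<noteq> \<infinity>" "incseq A"
    using sigma_finite_measure.sigma_finite_incseq[OF assms] by metis
  have "simple_fun M (\<lambda>t. indicator (A n) t *\<^sub>R c)" for n
  proof (rule simple_funI[where B="A n"])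
    show "A n \<in> sets M" using A(1) by blast
    then show "simple_function M (\<lambda>t. indicator (A n) t *\<^sub>R c)"
      by (rule simple_function_scaleR[OF simple_function_indicator simple_function_const])
    show "emeasure M (A n) < \<infinity>" using A(3) by (simp add: less_top)
  qed simp
  moreover have "AE t in M. (\<lambda>n. indicator (A n) t *\<^sub>R c) \<longlonglongrightarrow> c"
  proof (rule AE_I2)
    fix t assume "t \<in> space M"
    then obtain i where "t \<in> A i" using A(2) by blast
    then have "eventually (\<lambda>n. t \<in> A n) sequentially"
      using A(4) unfolding eventually_sequentially incseq_def by blast
    then show "(\<lambda>n. indicator (A n) t *\<^sub>R c) \<longlonglongrightarrow> c"
      by (rule tendsto_eventually[OF eventually_mono]) simp
  qed
  ultimately show ?thesis
    unfolding bochner_measurable_def by (intro exI[of _ "\<lambda>n t. indicator (A n) t *\<^sub>R c"]) blast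
qed

lemma borel_measurable_AE_eq_complete:
  fixes f :: "'a \<Rightarrow> 'b::topological_space"
  assumes "complete_measure M" and "g \<in> borel_measurable M" and "AE t in M. g t = f t"
  shows "f \<in> borel_measurable M"
proof (rule borel_measurableI)
  fix S :: "'b set" assume "open S"
  then have "g -` S \<inter> space M \<in> sets M" using assms(2) by (intro measurable_sets) auto
  then show "f -` S \<inter> space M \<in> sets M"
    by (rule complete_measure.in_sets_AE[OF assms(1), rotated])
      (use assms(3) in \<open>auto elim!: eventually_mono\<close>)
qed

lemma bochner_measurable_borel_measurable:
  fixes f :: "'a \<Rightarrow> 'b::real_normed_vector"
  assumes "complete_measure M" and "bochner_measurable M f"
  shows "f \<in> borel_measurable M"
proof -
  obtain s where s: "\<forall>n. simple_fun M (s n)" and "AE t in M. (\<lambda>n. s n t) \<longlonglongrightarrow> f t"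
    using assms(2) unfolding bochner_measurable_def by blast
  then obtain N where N: "N \<in> null_sets M" "{t\<in>space M. \<not> (\<lambda>n. s n t) \<longlonglongrightarrow> f t} \<subseteq> N"
    by (auto simp: eventually_ae_filter)
  define f' where "f' t = (if t \<in> N then 0 else f t)" for t
  have "f' \<in> borel_measurable M"
  proof (rule borel_measurable_LIMSEQ_metric[where f="\<lambda>n t. if t \<in> N then 0 else s n t"])
    fix n
    have "s n \<in> borel_measurable M"
      using s by (blast intro: simple_funD(1) borel_measurable_simple_function)
    then show "(\<lambda>t. if t \<in> N then 0 else s n t) \<in> borel_measurable M"
      using N(1) by (intro measurable_If_set) auto
  next
    fix t assume "t \<in> space M"
    then show "(\<lambda>n. if t \<in> N then 0 else s n t) \<longlonglongrightarrow> f' t"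
      using N(2) by (cases "t \<in> N") (auto simp: f'_def)
  qed
  moreover have "AE t in M. f' t = f t"
    by (rule AE_I'[OF N(1)]) (auto simp: f'_def)
  ultimately show ?thesis
    using borel_measurable_AE_eq_complete[OF assms(1)] by blast
qed

lemma borel_measurable_norm_bochner:
  fixes f :: "'a \<Rightarrow> 'b::real_normed_vector"
  assumes "complete_measure M" and "bochner_measurable M f"
  shows "(\<lambda>t. norm (f t)) \<in> borel_measurable M"
  using bochner_measurable_borel_measurable[OF assms(1) bochner_measurable_norm[OF assms(2)]] .

lemma borel_measurable_norm_diff_simple_function:
  fixes f s :: "'a \<Rightarrow> 'b::real_normed_vector"
  assumes f: "f \<in> borel_measurable M" and s: "simple_function M s"
  shows "(\<lambda>t. norm (f t - s t)) \<in> borel_measurable M"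
proof -
  \<comment> \<open>\<open>f - s\<close> need not be Borel measurable when the values do not form a separable space,
    so the norm is assembled from the level sets of \<open>s\<close>.\<close>
  let ?S = "\<lambda>v. s -` {v} \<inter> space M"
  have "(\<lambda>t. \<Sum>v\<in>s ` space M. indicator (?S v) t * norm (f t - v)) \<in> borel_measurable M"
  proof (rule borel_measurable_sum)
    fix v :: 'b
    have "continuous_on UNIV (\<lambda>x. norm (x - v))" by (intro continuous_intros)
    then have "(\<lambda>t. norm (f t - v)) \<in> borel_measurable M"
      by (rule measurable_compose[OF f borel_measurable_continuous_onI])
    then show "(\<lambda>t. indicator (?S v) t * norm (f t - v)) \<in> borel_measurable M"
      using simple_functionD(2)[OF s] by (intro borel_measurable_times borel_measurable_indicator) auto
  qed
  moreover have "(\<Sum>v\<in>s ` space M. indicator (?S v) t * norm (f t - v)) = norm (f t - s t)"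
    if "t \<in> space M" for t
  proof -
    have "(\<Sum>v\<in>s ` space M. indicator (?S v) t * norm (f t - v))
        = (\<Sum>v\<in>s ` space M. if v = s t then norm (f t - v) else 0)"
      using that by (intro sum.cong) (auto simp: indicator_def)
    then show ?thesis using that simple_functionD(1)[OF s] by simp
  qed
  ultimately show ?thesis by (simp cong: measurable_cong)
qed

lemma simple_function_restrict:
  assumes "finite F" and "\<And>j. j \<in> F \<Longrightarrow> simple_function M (u j)"
  shows "simple_function M (\<lambda>t. restrict (\<lambda>j. u j t) F)"
  using assms
proof (induction F rule: finite_induct)
  case empty
  then show ?case by simp
next
  case (insert a F)
  have "simple_function M (\<lambda>t. restrict (\<lambda>j. u j t) F)" "simple_function M (u a)"
    using insert.IH insert.prems by blast+
  then have "simple_function M (\<lambda>t. (restrict (\<lambda>j. u j t) F)(a := u a t))"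
    by (rule simple_function_compose2[where h="\<lambda>r v. r(a := v)"])
  moreover have "(\<lambda>t. (restrict (\<lambda>j. u j t) F)(a := u a t)) = (\<lambda>t. restrict (\<lambda>j. u j t) (insert a F))"
    by (auto simp: restrict_def fun_eq_iff)
  ultimately show ?case by metis
qed

lemma bochner_measurable_scaleR_simple_limit:
  fixes \<rho> :: "'a \<Rightarrow> real" and V :: "nat \<Rightarrow> 'a \<Rightarrow> 'b::real_normed_vector"
  assumes \<rho>: "bochner_measurable M \<rho>" and V: "\<And>N. simple_function M (V N)"
    and lim: "AE t in M. (\<lambda>N. V N t) \<longlonglongrightarrow> v t"
  shows "bochner_measurable M (\<lambda>t. \<rho> t *\<^sub>R v t)"
proof -
  obtain R where R: "\<forall>N. simple_fun M (R N)" and R_lim: "AE t in M. (\<lambda>N. R N t) \<longlonglongrightarrow> \<rho> t"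
    using \<rho> unfolding bochner_measurable_def by blast
  have "simple_fun M (\<lambda>t. R N t *\<^sub>R V N t)" for N
  proof -
    obtain B where B: "B \<in> sets M" "emeasure M B < \<infinity>" "\<forall>t\<in>space M - B. R N t = 0"
      using simple_funD(2) R by blast
    have "simple_function M (R N)" using R simple_funD(1) by blast
    then have "simple_function M (\<lambda>t. R N t *\<^sub>R V N t)"
      using V by (rule simple_function_scaleR)
    then show ?thesis using B by (intro simple_funI[where B=B]) auto
  qed
  moreover have "AE t in M. (\<lambda>N. R N t *\<^sub>R V N t) \<longlonglongrightarrow> \<rho> t *\<^sub>R v t"
    using R_lim lim by eventually_elim (rule tendsto_scaleR)
  ultimately show ?thesis
    unfolding bochner_measurable_def by (intro exI[of _ "\<lambda>N t. R N t *\<^sub>R V N t"]) blast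
qed

lemma sum_first_hit:
  fixes w :: "nat \<Rightarrow> 'b::comm_monoid_add"
  assumes "P n" and "(LEAST i. P i) \<le> N"
  shows "(\<Sum>i\<le>N. if P i \<and> (\<forall>m<i. \<not> P m) then w i else 0) = w (LEAST i. P i)"
proof -
  have "P i \<and> (\<forall>m<i. \<not> P m) \<longleftrightarrow> i = (LEAST i. P i)" for i
    using assms(1) by (metis LeastI Least_equality not_less not_less_Least)
  then show ?thesis using assms(2) by simp
qed

lemma bochner_measurable_first_hit_selection:
  fixes Q :: "nat \<Rightarrow> 'a \<Rightarrow> 'c" and \<rho> :: "'a \<Rightarrow> real" and W :: "'c \<Rightarrow> 'b::real_normed_vector"
  assumes Q: "\<And>n. simple_function M (Q n)" and P: "\<And>n. {t\<in>space M. P n t} \<in> sets M"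
    and \<rho>: "bochner_measurable M \<rho>"
  obtains g where "bochner_measurable M g"
    and "\<And>t n. P n t \<Longrightarrow> \<exists>m. P m t \<and> g t = \<rho> t *\<^sub>R W (Q m t)"
    and "\<And>t. \<forall>n. \<not> P n t \<Longrightarrow> g t = 0"
proof -
  \<comment> \<open>Selecting at the least hit makes the selection a pointwise limit of simple functions.\<close>
  define C where "C n = {t\<in>space M. P n t} - (\<Union>m<n. {t\<in>space M. P m t})" for n
  define V where "V N t = (\<Sum>n\<le>N. indicator (C n) t *\<^sub>R W (Q n t))" for N t
  define v where "v t = (if \<exists>n. P n t then W (Q (LEAST n. P n t) t) else 0)" for t
  have "simple_function M (V N)" for N
    unfolding V_def
  proof (rule simple_function_sum)
    fix n
    have "C n \<in> sets M" unfolding C_def using P by (intro sets.Diff sets.finite_UN) auto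
    moreover have "simple_function M (\<lambda>t. W (Q n t))" using Q by (rule simple_function_compose1)
    ultimately show "simple_function M (\<lambda>t. indicator (C n) t *\<^sub>R W (Q n t))"
      by (rule simple_function_scaleR[OF simple_function_indicator])
  qed
  moreover have "(\<lambda>N. V N t) \<longlonglongrightarrow> v t" if "t \<in> space M" for t
  proof -
    have V_eq: "V N t = (\<Sum>n\<le>N. if P n t \<and> (\<forall>m<n. \<not> P m t) then W (Q n t) else 0)" for N
      unfolding V_def C_def using that by (intro sum.cong) (auto simp: indicator_def)
    show ?thesis
    proof (cases "\<exists>n. P n t")
      case True
      then obtain n where "P n t" by blast
      then have "V N t = v t" if "(LEAST n. P n t) \<le> N" for N
        using sum_first_hit[of "\<lambda>i. P i t" n N "\<lambda>i. W (Q i t)"] that True by (simp add: V_eq v_def)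
      then have "eventually (\<lambda>N. V N t = v t) sequentially"
        unfolding eventually_sequentially by blast
      then show ?thesis by (rule tendsto_eventually)
    qed (simp add: V_eq v_def)
  qed
  ultimately have "bochner_measurable M (\<lambda>t. \<rho> t *\<^sub>R v t)"
    by (intro bochner_measurable_scaleR_simple_limit[OF \<rho>] AE_I2)
  moreover have "\<exists>m. P m t \<and> \<rho> t *\<^sub>R v t = \<rho> t *\<^sub>R W (Q m t)" if "P n t" for t n
    using that LeastI[of "\<lambda>n. P n t"] by (auto simp: v_def)
  moreover have "\<rho> t *\<^sub>R v t = 0" if "\<forall>n. \<not> P n t" for t
    using that by (simp add: v_def)
  ultimately show ?thesis by (rule that)
qed

lemma bochner_measurable_relative_selection:
  fixes f :: "'a \<Rightarrow> 'b::real_normed_vector" and W :: "'b \<Rightarrow> 'c::real_normed_vector"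
  assumes "complete_measure M" and f: "bochner_measurable M f" and "0 < \<delta>"
  obtains g where "bochner_measurable M g"
    and "AE t in M. f t \<noteq> 0 \<longrightarrow> (\<exists>u. norm (f t - u) \<le> \<delta> * norm (f t) \<and> g t = norm (f t) *\<^sub>R W u)"
    and "AE t in M. f t = 0 \<longrightarrow> g t = 0"
proof -
  obtain s where s: "\<forall>n. simple_fun M (s n)" and s_lim: "AE t in M. (\<lambda>n. s n t) \<longlonglongrightarrow> f t"
    using f unfolding bochner_measurable_def by blast
  have s_sf: "simple_function M (s n)" for n using s simple_funD(1) by blast
  have f_bm: "f \<in> borel_measurable M" by (rule bochner_measurable_borel_measurable[OF assms(1) f])
  define P where "P n t \<longleftrightarrow> norm (f t - s n t) \<le> \<delta> * norm (f t)" for n t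
  have P_sets: "{t\<in>space M. P n t} \<in> sets M" for n
    unfolding P_def using borel_measurable_norm_diff_simple_function[OF f_bm s_sf]
      borel_measurable_times[OF borel_measurable_const measurable_compose[OF f_bm borel_measurable_norm]]
    by (rule borel_measurable_le)
  obtain g where g: "bochner_measurable M g"
    and g_hit: "\<And>t n. P n t \<Longrightarrow> \<exists>m. P m t \<and> g t = norm (f t) *\<^sub>R W (s m t)"
    and g_miss: "\<And>t. \<forall>n. \<not> P n t \<Longrightarrow> g t = 0"
    by (rule bochner_measurable_first_hit_selection[where Q=s and P=P and W=W,
          OF s_sf P_sets bochner_measurable_norm[OF f]]) blast
  have "AE t in M. f t \<noteq> 0 \<longrightarrow> (\<exists>u. norm (f t - u) \<le> \<delta> * norm (f t) \<and> g t = norm (f t) *\<^sub>R W u)"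
    using s_lim
  proof eventually_elim
    case (elim t)
    show ?case
    proof
      assume "f t \<noteq> 0"
      then have "0 < \<delta> * norm (f t)" using \<open>0 < \<delta>\<close> by simp
      from tendstoD[OF elim this] obtain n where "dist (s n t) (f t) < \<delta> * norm (f t)"
        unfolding eventually_sequentially by blast
      then have "P n t" by (simp add: P_def dist_norm norm_minus_commute)
      then show "\<exists>u. norm (f t - u) \<le> \<delta> * norm (f t) \<and> g t = norm (f t) *\<^sub>R W u"
        using g_hit unfolding P_def by blast
    qed
  qed
  moreover have "AE t in M. f t = 0 \<longrightarrow> g t = 0"
    using g_hit g_miss by (intro AE_I2) (metis scaleR_zero_left norm_zero)
  ultimately show ?thesis using g that by blast
qed

lemma bochner_measurable_finite_family_selection:
  fixes F :: "('a \<Rightarrow> 'b::real_normed_vector) set" and W :: "(('a \<Rightarrow> 'b) \<Rightarrow> 'b) \<Rightarrow> 'c::real_normed_vector"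
  assumes "complete_measure M" and "sigma_finite_measure M"
    and "finite F" and F_bm: "\<And>j. j \<in> F \<Longrightarrow> bochner_measurable M j" and "0 < \<delta>"
  obtains g where "bochner_measurable M g"
    and "AE t in M. \<exists>v. (\<forall>j\<in>F. norm (j t - v j) \<le> \<delta>) \<and> g t = W v"
proof -
  have "\<forall>j\<in>F. \<exists>s. (\<forall>n. simple_fun M (s n)) \<and> (AE t in M. (\<lambda>n. s n t) \<longlonglongrightarrow> j t)"
    using F_bm unfolding bochner_measurable_def by blast
  then obtain S where S: "\<And>j n. j \<in> F \<Longrightarrow> simple_fun M (S j n)"
    and S_lim: "\<And>j. j \<in> F \<Longrightarrow> AE t in M. (\<lambda>n. S j n t) \<longlonglongrightarrow> j t"
    by metis
  have S_sf: "simple_function M (S j n)" if "j \<in> F" for j n using S[OF that] by (rule simple_funD(1))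
  define Q where "Q n t = restrict (\<lambda>j. S j n t) F" for n t
  have Q: "simple_function M (Q n)" for n
    unfolding Q_def using \<open>finite F\<close> S_sf by (rule simple_function_restrict)
  define P where "P n t \<longleftrightarrow> (\<forall>j\<in>F. norm (j t - S j n t) \<le> \<delta>)" for n t
  have "Measurable.pred M (P n)" for n
    unfolding P_def
  proof (rule pred_intros_finite(3)[OF \<open>finite F\<close>])
    fix j assume "j \<in> F"
    show "Measurable.pred M (\<lambda>t. norm (j t - S j n t) \<le> \<delta>)"
      unfolding pred_def using borel_measurable_norm_diff_simple_function[OF
          bochner_measurable_borel_measurable[OF assms(1) F_bm[OF \<open>j \<in> F\<close>]] S_sf[OF \<open>j \<in> F\<close>]]
      by (rule borel_measurable_le[OF _ borel_measurable_const])
  qed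
  then have P_sets: "{t\<in>space M. P n t} \<in> sets M" for n by (simp add: pred_def)
  obtain g where g: "bochner_measurable M g"
    and g_hit: "\<And>t n. P n t \<Longrightarrow> \<exists>m. P m t \<and> g t = 1 *\<^sub>R W (Q m t)"
    by (rule bochner_measurable_first_hit_selection[where Q=Q and P=P and W=W,
          OF Q P_sets bochner_measurable_const[OF assms(2)]]) blast
  have "AE t in M. \<forall>j\<in>F. (\<lambda>n. S j n t) \<longlonglongrightarrow> j t"
    using \<open>finite F\<close> S_lim by (simp add: eventually_ball_finite)
  then have "AE t in M. \<exists>v. (\<forall>j\<in>F. norm (j t - v j) \<le> \<delta>) \<and> g t = W v"
  proof eventually_elim
    case (elim t)
    have "\<forall>j\<in>F. eventually (\<lambda>n. norm (j t - S j n t) \<le> \<delta>) sequentially"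
      using elim \<open>0 < \<delta>\<close>
      by (auto dest!: tendstoD elim!: eventually_mono simp: dist_norm norm_minus_commute)
    then have "eventually (\<lambda>n. P n t) sequentially"
      using \<open>finite F\<close> unfolding P_def by (simp add: eventually_ball_finite)
    then obtain n where "P n t" by (auto simp: eventually_sequentially)
    then obtain m where "P m t" and "g t = W (Q m t)" using g_hit by auto
    then show ?case by (intro exI[of _ "Q m t"]) (simp add: P_def Q_def)
  qed
  with g show ?thesis by (rule that)
qed

lemma LIMSEQ_of_abs_diff_le_inverse:
  fixes u :: "nat \<Rightarrow> real"
  assumes "\<And>k. \<bar>u k - l\<bar> \<le> inverse (real (Suc k))"
  shows "u \<longlonglongrightarrow> l"
proof -
  have "(\<lambda>k. u k - l) \<longlonglongrightarrow> 0"
    using assms by (intro Lim_null_comparison[OF _ LIMSEQ_inverse_real_of_nat] always_eventually) simp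
  then show ?thesis by (simp add: LIM_zero_iff)
qed

lemma lasq_onI_approx:
  assumes "\<And>x \<epsilon>. x \<in> V \<Longrightarrow> N x = 1 \<Longrightarrow> 0 < \<epsilon> \<Longrightarrow> \<epsilon> \<le> 1 \<Longrightarrow>
    \<exists>y\<in>V. N y \<le> 1 \<and> 1 - \<epsilon> \<le> N y \<and> \<bar>N (x + y) - 1\<bar> \<le> \<epsilon> \<and> \<bar>N (x - y) - 1\<bar> \<le> \<epsilon>"
  shows "lasq_on V N"
  unfolding lasq_on_def
proof (intro ballI impI)
  fix x assume "x \<in> V" "N x = 1"
  have "\<forall>k. \<exists>y\<in>V. N y \<le> 1 \<and> 1 - inverse (real (Suc k)) \<le> N y \<and>
      \<bar>N (x + y) - 1\<bar> \<le> inverse (real (Suc k)) \<and> \<bar>N (x - y) - 1\<bar> \<le> inverse (real (Suc k))"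
    using assms[OF \<open>x \<in> V\<close> \<open>N x = 1\<close>] by (simp add: inverse_le_1_iff)
  then obtain y where y: "\<And>k. y k \<in> V \<and> N (y k) \<le> 1 \<and> 1 - inverse (real (Suc k)) \<le> N (y k) \<and>
      \<bar>N (x + y k) - 1\<bar> \<le> inverse (real (Suc k)) \<and> \<bar>N (x - y k) - 1\<bar> \<le> inverse (real (Suc k))"
    by metis
  have "\<bar>N (y k) - 1\<bar> \<le> inverse (real (Suc k))" for k
    using y[of k] by (simp add: abs_diff_le_iff)
  then have "(\<lambda>k. N (y k)) \<longlonglongrightarrow> 1" "(\<lambda>k. N (x + y k)) \<longlonglongrightarrow> 1" "(\<lambda>k. N (x - y k)) \<longlonglongrightarrow> 1"
    using y by (simp_all add: LIMSEQ_of_abs_diff_le_inverse)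
  then show "\<exists>y. (\<forall>k. y k \<in> V \<and> N (y k) \<le> 1) \<and> (\<lambda>k. N (y k)) \<longlonglongrightarrow> 1 \<and>
      (\<lambda>k. N (x + y k)) \<longlonglongrightarrow> 1 \<and> (\<lambda>k. N (x - y k)) \<longlonglongrightarrow> 1"
    using y by blast
qed

lemma asq_onI_approx:
  assumes "\<And>F \<epsilon>. finite F \<Longrightarrow> F \<noteq> {} \<Longrightarrow> F \<subseteq> V \<Longrightarrow> (\<forall>x\<in>F. N x = 1) \<Longrightarrow> 0 < \<epsilon> \<Longrightarrow> \<epsilon> \<le> 1 \<Longrightarrow>
    \<exists>y\<in>V. N y \<le> 1 \<and> 1 - \<epsilon> \<le> N y \<and> (\<forall>x\<in>F. \<bar>N (x + y) - 1\<bar> \<le> \<epsilon>)"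
  shows "asq_on V N"
  unfolding asq_on_def
proof (intro allI impI)
  fix F assume F: "finite F \<and> F \<noteq> {} \<and> F \<subseteq> V \<and> (\<forall>x\<in>F. N x = 1)"
  have "\<forall>k. \<exists>y\<in>V. N y \<le> 1 \<and> 1 - inverse (real (Suc k)) \<le> N y \<and>
      (\<forall>x\<in>F. \<bar>N (x + y) - 1\<bar> \<le> inverse (real (Suc k)))"
    using F assms by (simp add: inverse_le_1_iff)
  then obtain y where y: "\<And>k. y k \<in> V \<and> N (y k) \<le> 1 \<and> 1 - inverse (real (Suc k)) \<le> N (y k) \<and>
      (\<forall>x\<in>F. \<bar>N (x + y k) - 1\<bar> \<le> inverse (real (Suc k)))"
    by metis
  have "\<bar>N (y k) - 1\<bar> \<le> inverse (real (Suc k))" for k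
    using y[of k] by (simp add: abs_diff_le_iff)
  then have "(\<lambda>k. N (y k)) \<longlonglongrightarrow> 1" "\<forall>x\<in>F. (\<lambda>k. N (x + y k)) \<longlonglongrightarrow> 1"
    using y by (simp_all add: LIMSEQ_of_abs_diff_le_inverse)
  then show "\<exists>y. (\<forall>k. y k \<in> V \<and> N (y k) \<le> 1) \<and> (\<lambda>k. N (y k)) \<longlonglongrightarrow> 1 \<and>
      (\<forall>x\<in>F. (\<lambda>k. N (x + y k)) \<longlonglongrightarrow> 1)"
    using y by blast
qed

lemma LASQ_witness:
  assumes "LASQ TYPE('b)" and "0 < \<eta>"
  obtains Y :: "'b::real_normed_vector \<Rightarrow> 'b" where "\<And>e. norm e = 1 \<Longrightarrow>
    norm (Y e) \<le> 1 \<and> 1 - \<eta> \<le> norm (Y e) \<and> norm (e + Y e) \<le> 1 + \<eta> \<and> norm (e - Y e) \<le> 1 + \<eta>"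
proof -
  have "\<exists>y. norm e = 1 \<longrightarrow>
      norm y \<le> 1 \<and> 1 - \<eta> \<le> norm y \<and> norm (e + y) \<le> 1 + \<eta> \<and> norm (e - y) \<le> 1 + \<eta>" for e :: 'b
  proof (cases "norm e = 1")
    case True
    then obtain y :: "nat \<Rightarrow> 'b" where y: "\<forall>k. norm (y k) \<le> 1" and lim: "(\<lambda>k. norm (y k)) \<longlonglongrightarrow> 1"
      "(\<lambda>k. norm (e + y k)) \<longlonglongrightarrow> 1" "(\<lambda>k. norm (e - y k)) \<longlonglongrightarrow> 1"
      using assms(1) unfolding lasq_on_def by blast
    have "eventually (\<lambda>k. dist (norm (y k)) 1 < \<eta> \<and> dist (norm (e + y k)) 1 < \<eta> \<and>
        dist (norm (e - y k)) 1 < \<eta>) sequentially"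
      using lim \<open>0 < \<eta>\<close> by (intro eventually_conj tendstoD)
    then obtain k where "dist (norm (y k)) 1 < \<eta>" "dist (norm (e + y k)) 1 < \<eta>"
      "dist (norm (e - y k)) 1 < \<eta>"
      unfolding eventually_sequentially by blast
    then show ?thesis
      using y by (intro exI[of _ "y k"]) (simp add: dist_real_def abs_less_iff)
  qed simp
  then show thesis using that by metis
qed

lemma ASQ_witness:
  fixes G :: "'b::real_normed_vector set"
  assumes "ASQ TYPE('b)" and "finite G" "G \<noteq> {}" "\<forall>e\<in>G. norm e = 1"
    and "0 < \<eta>"
  obtains y :: 'b where "norm y \<le> 1" "1 - \<eta> \<le> norm y"
    "\<forall>e\<in>G. 1 - \<eta> \<le> norm (e + y) \<and> norm (e + y) \<le> 1 + \<eta>"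
proof -
  have "\<exists>y::nat \<Rightarrow> 'b. (\<forall>k. y k \<in> UNIV \<and> norm (y k) \<le> 1) \<and> (\<lambda>k. norm (y k)) \<longlonglongrightarrow> 1 \<and>
      (\<forall>e\<in>G. (\<lambda>k. norm (e + y k)) \<longlonglongrightarrow> 1)"
    using assms(1)[unfolded asq_on_def, rule_format, of G] assms(2-4) by blast
  then obtain y :: "nat \<Rightarrow> 'b" where y: "\<forall>k. norm (y k) \<le> 1"
    and lim: "(\<lambda>k. norm (y k)) \<longlonglongrightarrow> 1" "\<forall>e\<in>G. (\<lambda>k. norm (e + y k)) \<longlonglongrightarrow> 1"
    by blast
  have "\<forall>e\<in>G. eventually (\<lambda>k. dist (norm (e + y k)) 1 < \<eta>) sequentially"
    using lim(2) \<open>0 < \<eta>\<close> tendstoD by blast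
  then have "eventually (\<lambda>k. \<forall>e\<in>G. dist (norm (e + y k)) 1 < \<eta>) sequentially"
    using \<open>finite G\<close> by (simp add: eventually_ball_finite)
  with tendstoD[OF lim(1) \<open>0 < \<eta>\<close>]
  have "eventually (\<lambda>k. dist (norm (y k)) 1 < \<eta> \<and> (\<forall>e\<in>G. dist (norm (e + y k)) 1 < \<eta>)) sequentially"
    by (rule eventually_conj)
  then obtain k where "dist (norm (y k)) 1 < \<eta>" "\<forall>e\<in>G. dist (norm (e + y k)) 1 < \<eta>"
    unfolding eventually_sequentially by blast
  then show ?thesis
    using y by (intro that[of "y k"]) (auto simp: dist_real_def abs_less_iff less_imp_le)
qed

lemma ASQ_sgn_witness:
  fixes e0 :: "'b::real_normed_vector" and F :: "'i set"
  assumes "ASQ TYPE('b)" and "finite F" and "norm e0 = 1" and "0 < \<eta>"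
  obtains W :: "('i \<Rightarrow> 'b) \<Rightarrow> 'b" where "\<And>v. norm (W v) \<le> 1 \<and> 1 - \<eta> \<le> norm (W v)"
    and "\<And>v j. j \<in> F \<Longrightarrow> v j \<noteq> 0 \<Longrightarrow> 1 - \<eta> \<le> norm (sgn (v j) + W v) \<and>
      norm (sgn (v j) + W v) \<le> 1 + \<eta> \<and> norm (- sgn (v j) + W v) \<le> 1 + \<eta>"
proof -
  \<comment> \<open>\<open>e0\<close> only makes \<open>G v\<close> nonempty, as the definition of ASQ requires.\<close>
  define G where "G v = insert e0 ((\<lambda>j. sgn (v j)) ` F \<union> (\<lambda>j. - sgn (v j)) ` F - {0})" for v
  have "\<exists>y. norm y \<le> 1 \<and> 1 - \<eta> \<le> norm y \<and> (\<forall>e\<in>G v. 1 - \<eta> \<le> norm (e + y) \<and> norm (e + y) \<le> 1 + \<eta>)"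
    for v
  proof -
    have "finite (G v)" "G v \<noteq> {}" "\<forall>e\<in>G v. norm e = 1"
      using assms(2,3) by (auto simp: G_def norm_sgn split: if_splits)
    from ASQ_witness[OF assms(1) this \<open>0 < \<eta>\<close>] show ?thesis by blast
  qed
  then obtain W where W: "\<And>v. norm (W v) \<le> 1 \<and> 1 - \<eta> \<le> norm (W v) \<and>
      (\<forall>e\<in>G v. 1 - \<eta> \<le> norm (e + W v) \<and> norm (e + W v) \<le> 1 + \<eta>)"
    by metis
  show thesis
  proof (rule that)
    show "norm (W v) \<le> 1 \<and> 1 - \<eta> \<le> norm (W v)" for v using W by blast
  next
    fix v :: "'i \<Rightarrow> 'b" and j assume "j \<in> F" "v j \<noteq> 0"
    then have "sgn (v j) \<in> G v" "- sgn (v j) \<in> G v" by (auto simp: G_def sgn_zero_iff)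
    then show "1 - \<eta> \<le> norm (sgn (v j) + W v) \<and> norm (sgn (v j) + W v) \<le> 1 + \<eta> \<and>
        norm (- sgn (v j) + W v) \<le> 1 + \<eta>"
      using W[of v] by blast
  qed
qed

section \<open>Norm estimates\<close>

lemma norm_sgn_diff_le:
  fixes x u :: "'b::real_normed_vector"
  assumes "x \<noteq> 0" and "u \<noteq> 0"
  shows "norm (sgn x - sgn u) \<le> 2 * norm (x - u) / norm x"
proof -
  have x: "norm x > 0" using assms(1) by simp
  have "sgn x - sgn u = (1 / norm x) *\<^sub>R (x - u) + ((norm u - norm x) / norm x) *\<^sub>R sgn u"
    using assms by (simp add: sgn_div_norm algebra_simps divide_inverse scaleR_diff_left)
  then have "norm (sgn x - sgn u) \<le> norm (x - u) / norm x + \<bar>norm u - norm x\<bar> / norm x"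
    using assms(2)
      norm_triangle_ineq[of "(1 / norm x) *\<^sub>R (x - u)" "((norm u - norm x) / norm x) *\<^sub>R sgn u"]
    by (simp add: norm_sgn)
  also have "\<bar>norm u - norm x\<bar> \<le> norm (x - u)"
    by (metis norm_minus_commute norm_triangle_ineq3)
  finally show ?thesis using x by (simp add: divide_right_mono add_divide_distrib[symmetric])
qed

lemma norm_add_scaled_le:
  fixes x u y :: "'b::real_normed_vector"
  assumes x: "x \<noteq> 0" and xu: "norm (x - u) \<le> \<delta> * norm x" and "\<delta> < 1"
    and "norm (sgn u + y) \<le> c"
  shows "norm (x + norm x *\<^sub>R y) \<le> (c + 2 * \<delta>) * norm x"
proof -
  have "u \<noteq> 0"
    using x xu \<open>\<delta> < 1\<close> by (auto simp: mult_le_cancel_right1)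
  have "norm (sgn x - sgn u) \<le> 2 * (\<delta> * norm x) / norm x"
    using norm_sgn_diff_le[OF x \<open>u \<noteq> 0\<close>] xu x by (smt (verit) divide_right_mono norm_ge_zero)
  then have "norm (sgn x - sgn u) \<le> 2 * \<delta>" using x by simp
  then have "norm (sgn x + y) \<le> c + 2 * \<delta>"
    using \<open>norm (sgn u + y) \<le> c\<close> norm_triangle_ineq[of "sgn u + y" "sgn x - sgn u"]
    by (simp add: algebra_simps)
  moreover have "x + norm x *\<^sub>R y = norm x *\<^sub>R (sgn x + y)"
    using x by (simp add: sgn_div_norm scaleR_add_right)
  ultimately show ?thesis
    by (simp add: mult.commute mult_left_mono)
qed

lemma norm_add_plus_norm_diff_ge:
  fixes x y :: "'b::real_normed_vector"
  shows "2 * norm x \<le> norm (x + y) + norm (x - y)"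
proof -
  have "2 * norm x = norm ((x + y) + (x - y))"
    by (simp flip: scaleR_2)
  also have "\<dots> \<le> norm (x + y) + norm (x - y)"
    by (rule norm_triangle_ineq)
  finally show ?thesis .
qed

lemma norm_scaled_witness_bounds:
  fixes x u y :: "'b::real_normed_vector"
  assumes x: "x \<noteq> 0" and xu: "norm (x - u) \<le> \<delta> * norm x" and "\<delta> < 1"
    and y: "norm y \<le> 1" "1 - \<eta> \<le> norm y" "norm (sgn u + y) \<le> 1 + \<eta>" "norm (sgn u - y) \<le> 1 + \<eta>"
  defines "c \<equiv> \<eta> + 2 * \<delta>"
  shows "(1 - \<eta>) * norm x \<le> norm (norm x *\<^sub>R y) \<and> norm (norm x *\<^sub>R y) \<le> norm x \<and>
    (1 - c) * norm x \<le> norm (x + norm x *\<^sub>R y) \<and> norm (x + norm x *\<^sub>R y) \<le> (1 + c) * norm x \<and>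
    (1 - c) * norm x \<le> norm (x - norm x *\<^sub>R y) \<and> norm (x - norm x *\<^sub>R y) \<le> (1 + c) * norm x"
proof -
  have plus: "norm (x + norm x *\<^sub>R y) \<le> (1 + c) * norm x"
    using norm_add_scaled_le[OF x xu \<open>\<delta> < 1\<close> y(3)] by (simp add: c_def add.assoc)
  have "norm (sgn u + - y) \<le> 1 + \<eta>" using y(4) by simp
  from norm_add_scaled_le[OF x xu \<open>\<delta> < 1\<close> this]
  have minus: "norm (x - norm x *\<^sub>R y) \<le> (1 + c) * norm x" by (simp add: c_def add.assoc)
  have "(1 - c) * norm x = 2 * norm x - (1 + c) * norm x" by (simp add: algebra_simps)
  then show ?thesis
    using plus minus y(1,2) norm_add_plus_norm_diff_ge[of x "norm x *\<^sub>R y"]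
      mult_right_mono[OF y(2) norm_ge_zero, of x]
    by (auto simp: mult.commute mult_left_le)
qed

lemma norm_diff_scaleR_sgn:
  fixes u :: "'b::real_normed_vector"
  assumes "u \<noteq> 0"
  shows "norm (u - t *\<^sub>R sgn u) = \<bar>norm u - t\<bar>"
proof -
  have "norm u *\<^sub>R sgn u = u" using assms by (simp add: sgn_div_norm)
  then have "u - t *\<^sub>R sgn u = (norm u - t) *\<^sub>R sgn u"
    by (metis scaleR_diff_left)
  then show ?thesis using assms by (simp add: norm_sgn)
qed

lemma norm_scaleR_add_le_convex:
  fixes e y :: "'b::real_normed_vector"
  assumes "\<bar>a\<bar> \<le> 1" and "norm (e + y) \<le> c" and "norm (- e + y) \<le> c"
  shows "norm (a *\<^sub>R e + y) \<le> c"
proof -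
  have "a *\<^sub>R e + y = ((1 + a) / 2) *\<^sub>R (e + y) + ((1 - a) / 2) *\<^sub>R (- e + y)"
    by (simp add: algebra_simps scaleR_add_left[symmetric] field_simps)
  then have "norm (a *\<^sub>R e + y) \<le> (1 + a) / 2 * norm (e + y) + (1 - a) / 2 * norm (- e + y)"
    using assms(1) norm_triangle_ineq[of "((1 + a) / 2) *\<^sub>R (e + y)" "((1 - a) / 2) *\<^sub>R (- e + y)"]
    by simp
  also have "\<dots> \<le> (1 + a) / 2 * c + (1 - a) / 2 * c"
    using assms by (intro add_mono mult_left_mono) auto
  finally show ?thesis by (simp add: field_simps)
qed

lemma norm_add_le_of_close:
  fixes x u y :: "'b::real_normed_vector"
  assumes "norm x \<le> 1" and xu: "norm (x - u) \<le> \<delta>"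
    and "norm (sgn u + y) \<le> c" and "norm (- sgn u + y) \<le> c"
  shows "norm (x + y) \<le> c + 2 * \<delta>"
proof -
  \<comment> \<open>After clipping \<open>u\<close> to the unit ball, \<open>a *\<^sub>R sgn u + y\<close> is a convex combination of
    \<open>sgn u + y\<close> and \<open>- sgn u + y\<close>.\<close>
  define a where "a = min (norm u) 1"
  have "0 \<le> \<delta>" using xu norm_ge_zero order_trans by blast
  have "norm u \<le> norm x + norm (x - u)"
    by (metis add.commute diff_add_cancel norm_minus_commute norm_triangle_ineq)
  then have "norm (u - a *\<^sub>R sgn u) \<le> \<delta>"
    using assms(1) xu \<open>0 \<le> \<delta>\<close> by (cases "u = 0") (auto simp: a_def norm_diff_scaleR_sgn)
  moreover have "norm (a *\<^sub>R sgn u + y) \<le> c"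
    using assms(3,4) by (intro norm_scaleR_add_le_convex) (auto simp: a_def)
  moreover have "x + y = (a *\<^sub>R sgn u + y) + (u - a *\<^sub>R sgn u) + (x - u)"
    by (simp add: algebra_simps)
  ultimately show ?thesis
    using xu norm_triangle_ineq[of "a *\<^sub>R sgn u + y + (u - a *\<^sub>R sgn u)" "x - u"]
      norm_triangle_ineq[of "a *\<^sub>R sgn u + y" "u - a *\<^sub>R sgn u"] by (simp add: add.commute)
qed

lemma norm_add_ge_of_close:
  fixes x u y :: "'b::real_normed_vector"
  assumes "norm x \<le> 1" and "1 - \<delta> \<le> norm x" and xu: "norm (x - u) \<le> \<delta>"
    and "c \<le> norm (sgn u + y)"
  shows "c - 3 * \<delta> \<le> norm (x + y)"
proof -
  have "\<bar>norm x - norm u\<bar> \<le> \<delta>"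
    using xu norm_triangle_ineq3[of x u] by linarith
  then have "norm (x - sgn u) \<le> 3 * \<delta>"
    using assms(1,2) xu norm_triangle_ineq[of "x - u" "u - sgn u"]
    by (cases "u = 0") (auto simp: norm_diff_scaleR_sgn[of u 1, simplified])
  then show ?thesis
    using assms(4) norm_triangle_ineq[of "x + y" "sgn u - x"]
    by (simp add: algebra_simps norm_minus_commute)
qed

lemma norm_add_bounds_of_close:
  fixes x u y :: "'b::real_normed_vector"
  assumes "norm x \<le> 1" and "norm (x - u) \<le> \<delta>" and "norm y \<le> 1" and "1 - \<eta> \<le> norm y" and "0 \<le> \<eta>"
    and "u \<noteq> 0 \<Longrightarrow> 1 - \<eta> \<le> norm (sgn u + y) \<and> norm (sgn u + y) \<le> 1 + \<eta> \<and> norm (- sgn u + y) \<le> 1 + \<eta>"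
  shows "norm (x + y) \<le> 1 + \<eta> + 2 * \<delta>"
    and "1 - \<delta> \<le> norm x \<Longrightarrow> 1 - \<eta> - 3 * \<delta> \<le> norm (x + y)"
proof -
  have "1 - \<eta> \<le> norm (sgn u + y) \<and> norm (sgn u + y) \<le> 1 + \<eta> \<and> norm (- sgn u + y) \<le> 1 + \<eta>"
    using assms by (cases "u = 0") auto
  then show "norm (x + y) \<le> 1 + \<eta> + 2 * \<delta>"
    and "1 - \<delta> \<le> norm x \<Longrightarrow> 1 - \<eta> - 3 * \<delta> \<le> norm (x + y)"
    using norm_add_le_of_close[OF assms(1,2)] norm_add_ge_of_close[OF assms(1) _ assms(2)] by blast+
qed

lemma LASQ_measurable_witness:
  fixes f :: "'a \<Rightarrow> 'b::real_normed_vector"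
  assumes "complete_measure M" and "LASQ TYPE('b)" and f: "bochner_measurable M f"
    and "0 < \<epsilon>" "\<epsilon> \<le> 1"
  obtains g where "bochner_measurable M g"
    and "AE t in M. (1 - \<epsilon>) * norm (f t) \<le> norm (g t) \<and> norm (g t) \<le> norm (f t) \<and>
      (1 - \<epsilon>) * norm (f t) \<le> norm (f t + g t) \<and> norm (f t + g t) \<le> (1 + \<epsilon>) * norm (f t) \<and>
      (1 - \<epsilon>) * norm (f t) \<le> norm (f t - g t) \<and> norm (f t - g t) \<le> (1 + \<epsilon>) * norm (f t)"
proof -
  define \<eta> where "\<eta> = \<epsilon> / 2"
  define \<delta> where "\<delta> = \<epsilon> / 4"
  have "0 < \<eta>" "0 < \<delta>" "\<delta> < 1" "\<eta> + 2 * \<delta> = \<epsilon>" "1 - \<epsilon> \<le> 1 - \<eta>"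
    using \<open>0 < \<epsilon>\<close> \<open>\<epsilon> \<le> 1\<close> by (simp_all add: \<eta>_def \<delta>_def)
  obtain Y :: "'b \<Rightarrow> 'b" where Y: "\<And>e. norm e = 1 \<Longrightarrow> norm (Y e) \<le> 1 \<and> 1 - \<eta> \<le> norm (Y e) \<and>
      norm (e + Y e) \<le> 1 + \<eta> \<and> norm (e - Y e) \<le> 1 + \<eta>"
    by (rule LASQ_witness[OF assms(2) \<open>0 < \<eta>\<close>]) blast
  obtain g where g: "bochner_measurable M g"
    and g_near: "AE t in M. f t \<noteq> 0 \<longrightarrow>
      (\<exists>u. norm (f t - u) \<le> \<delta> * norm (f t) \<and> g t = norm (f t) *\<^sub>R Y (sgn u))"
    and g_zero: "AE t in M. f t = 0 \<longrightarrow> g t = 0"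
    by (rule bochner_measurable_relative_selection[OF assms(1) f \<open>0 < \<delta>\<close>, where W="\<lambda>u. Y (sgn u)"])
  have "AE t in M. (1 - \<epsilon>) * norm (f t) \<le> norm (g t) \<and> norm (g t) \<le> norm (f t) \<and>
      (1 - \<epsilon>) * norm (f t) \<le> norm (f t + g t) \<and> norm (f t + g t) \<le> (1 + \<epsilon>) * norm (f t) \<and>
      (1 - \<epsilon>) * norm (f t) \<le> norm (f t - g t) \<and> norm (f t - g t) \<le> (1 + \<epsilon>) * norm (f t)"
    using g_near g_zero
  proof eventually_elim
    case (elim t)
    show ?case
    proof (cases "f t = 0")
      case False
      then obtain u where u: "norm (f t - u) \<le> \<delta> * norm (f t)" and g_eq: "g t = norm (f t) *\<^sub>R Y (sgn u)"
        using elim by blast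
      then have "u \<noteq> 0" using False \<open>\<delta> < 1\<close> by (auto simp: mult_le_cancel_right1)
      then have "norm (sgn u) = 1" by (simp add: norm_sgn)
      from norm_scaled_witness_bounds[OF False u \<open>\<delta> < 1\<close>] Y[OF this]
      show ?thesis
        using \<open>\<eta> + 2 * \<delta> = \<epsilon>\<close> mult_right_mono[OF \<open>1 - \<epsilon> \<le> 1 - \<eta>\<close> norm_ge_zero, of "f t"]
        unfolding g_eq by fastforce
    qed (use elim in simp)
  qed
  with g show ?thesis by (rule that)
qed

lemma ASQ_measurable_witness:
  fixes F :: "('a \<Rightarrow> 'b::real_normed_vector) set" and e0 :: 'b
  assumes "complete_measure M" and "sigma_finite_measure M" and "ASQ TYPE('b)"
    and "finite F" and "\<And>j. j \<in> F \<Longrightarrow> bochner_measurable M j"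
    and "norm e0 = 1" and "0 < \<eta>" and "0 < \<delta>"
  obtains g where "bochner_measurable M g"
    and "AE t in M. norm (g t) \<le> 1 \<and> 1 - \<eta> \<le> norm (g t) \<and>
      (\<forall>j\<in>F. norm (j t) \<le> 1 \<longrightarrow> norm (j t + g t) \<le> 1 + \<eta> + 2 * \<delta> \<and>
        (1 - \<delta> \<le> norm (j t) \<longrightarrow> 1 - \<eta> - 3 * \<delta> \<le> norm (j t + g t)))"
proof -
  obtain W :: "(('a \<Rightarrow> 'b) \<Rightarrow> 'b) \<Rightarrow> 'b" where W: "\<And>v. norm (W v) \<le> 1 \<and> 1 - \<eta> \<le> norm (W v)"
    and W_sgn: "\<And>v j. j \<in> F \<Longrightarrow> v j \<noteq> 0 \<Longrightarrow> 1 - \<eta> \<le> norm (sgn (v j) + W v) \<and>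
      norm (sgn (v j) + W v) \<le> 1 + \<eta> \<and> norm (- sgn (v j) + W v) \<le> 1 + \<eta>"
    by (rule ASQ_sgn_witness[OF assms(3,4,6,7)]) blast
  obtain g where g: "bochner_measurable M g"
    and g_near: "AE t in M. \<exists>v. (\<forall>j\<in>F. norm (j t - v j) \<le> \<delta>) \<and> g t = W v"
    by (rule bochner_measurable_finite_family_selection[OF assms(1,2,4,5,8)])
  have "AE t in M. norm (g t) \<le> 1 \<and> 1 - \<eta> \<le> norm (g t) \<and>
      (\<forall>j\<in>F. norm (j t) \<le> 1 \<longrightarrow> norm (j t + g t) \<le> 1 + \<eta> + 2 * \<delta> \<and>
        (1 - \<delta> \<le> norm (j t) \<longrightarrow> 1 - \<eta> - 3 * \<delta> \<le> norm (j t + g t)))"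
    using g_near
  proof eventually_elim
    case (elim t)
    then obtain v where "\<forall>j\<in>F. norm (j t - v j) \<le> \<delta>" and g_eq: "g t = W v" by blast
    then show ?case
      using norm_add_bounds_of_close[of "j t" "v j" \<delta> "g t" \<eta> for j] W[of v] W_sgn[of _ v] \<open>0 < \<eta>\<close>
      unfolding g_eq by fastforce
  qed
  with g show ?thesis by (rule that)
qed

section \<open>Solid spaces of Bochner measurable functions\<close>

definition solid_bochner_space ::
    "'a measure \<Rightarrow> ('a \<Rightarrow> 'b::real_normed_vector) set \<Rightarrow> (('a \<Rightarrow> 'b) \<Rightarrow> real) \<Rightarrow> bool"
  where "solid_bochner_space M V N \<longleftrightarrow> (\<forall>x\<in>V. bochner_measurable M x \<and> 0 \<le> N x) \<and>
    (\<forall>x\<in>V. \<forall>h c. bochner_measurable M h \<longrightarrow> 0 \<le> c \<longrightarrow>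
       (AE t in M. norm (h t) \<le> c * norm (x t)) \<longrightarrow> h \<in> V \<and> N h \<le> c * N x)"

lemma solid_bochner_spaceI:
  assumes "\<And>x. x \<in> V \<Longrightarrow> bochner_measurable M x" and "\<And>x. x \<in> V \<Longrightarrow> 0 \<le> N x"
    and "\<And>x h c. x \<in> V \<Longrightarrow> bochner_measurable M h \<Longrightarrow> 0 \<le> c \<Longrightarrow>
      AE t in M. norm (h t) \<le> c * norm (x t) \<Longrightarrow> h \<in> V \<and> N h \<le> c * N x"
  shows "solid_bochner_space M V N"
  using assms unfolding solid_bochner_space_def by blast

lemma solid_bochner_spaceD:
  assumes "solid_bochner_space M V N" and "x \<in> V"
  shows "bochner_measurable M x" and "0 \<le> N x"
    and "bochner_measurable M h \<Longrightarrow> 0 \<le> c \<Longrightarrow> AE t in M. norm (h t) \<le> c * norm (x t) \<Longrightarrow> h \<in> V \<and> N h \<le> c * N x"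
  using assms unfolding solid_bochner_space_def by blast+

lemma solid_bochner_space_between:
  assumes solid: "solid_bochner_space M V N" and x: "x \<in> V" and h: "bochner_measurable M h"
    and "0 \<le> a" "a \<le> b" and ae: "AE t in M. a * norm (x t) \<le> norm (h t) \<and> norm (h t) \<le> b * norm (x t)"
  shows "h \<in> V \<and> a * N x \<le> N h \<and> N h \<le> b * N x"
proof -
  have "h \<in> V \<and> N h \<le> b * N x"
    using ae \<open>0 \<le> a\<close> \<open>a \<le> b\<close>
    by (intro solid_bochner_spaceD(3)[OF solid x h]) (auto elim: eventually_mono)
  moreover have "a * N x \<le> N h"
  proof (cases "a = 0")
    case True
    then show ?thesis using solid_bochner_spaceD(2)[OF solid] \<open>h \<in> V \<and> N h \<le> b * N x\<close> by simp
  next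
    case False
    then have "0 < a" using \<open>0 \<le> a\<close> by simp
    have "AE t in M. norm (x t) \<le> inverse a * norm (h t)"
      using ae \<open>0 < a\<close> by (auto elim!: eventually_mono simp: field_simps)
    then have "N x \<le> inverse a * N h"
      using \<open>0 < a\<close> \<open>h \<in> V \<and> N h \<le> b * N x\<close>
      by (intro solid_bochner_spaceD(3)[OF solid _ solid_bochner_spaceD(1)[OF solid x], THEN conjunct2])
        auto
    then show ?thesis using \<open>0 < a\<close> by (simp add: field_simps)
  qed
  ultimately show ?thesis by blast
qed

lemma lasq_on_solid_bochner_space:
  fixes V :: "('a \<Rightarrow> 'b::real_normed_vector) set"
  assumes "complete_measure M" and "LASQ TYPE('b)" and solid: "solid_bochner_space M V N"
  shows "lasq_on V N"
proof (rule lasq_onI_approx)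
  fix x and \<epsilon> :: real assume "x \<in> V" "N x = 1" "0 < \<epsilon>" "\<epsilon> \<le> 1"
  have x: "bochner_measurable M x" using solid_bochner_spaceD(1)[OF solid \<open>x \<in> V\<close>] .
  have N_between: "h \<in> V \<and> a \<le> N h \<and> N h \<le> b"
    if "bochner_measurable M h" "0 \<le> a" "a \<le> b"
      "AE t in M. a * norm (x t) \<le> norm (h t) \<and> norm (h t) \<le> b * norm (x t)" for h a b
    using solid_bochner_space_between[OF solid \<open>x \<in> V\<close> that] \<open>N x = 1\<close> by simp
  obtain g where g: "bochner_measurable M g"
    and g_ae: "AE t in M. (1 - \<epsilon>) * norm (x t) \<le> norm (g t) \<and> norm (g t) \<le> norm (x t) \<and>
      (1 - \<epsilon>) * norm (x t) \<le> norm (x t + g t) \<and> norm (x t + g t) \<le> (1 + \<epsilon>) * norm (x t) \<and>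
      (1 - \<epsilon>) * norm (x t) \<le> norm (x t - g t) \<and> norm (x t - g t) \<le> (1 + \<epsilon>) * norm (x t)"
    by (rule LASQ_measurable_witness[OF assms(1,2) x \<open>0 < \<epsilon>\<close> \<open>\<epsilon> \<le> 1\<close>]) blast
  have "g \<in> V \<and> 1 - \<epsilon> \<le> N g \<and> N g \<le> 1"
    using g_ae \<open>0 < \<epsilon>\<close> \<open>\<epsilon> \<le> 1\<close> by (intro N_between[OF g]) (auto elim: eventually_mono)
  moreover have "x + g \<in> V \<and> 1 - \<epsilon> \<le> N (x + g) \<and> N (x + g) \<le> 1 + \<epsilon>"
    unfolding plus_fun_def using g_ae \<open>0 < \<epsilon>\<close> \<open>\<epsilon> \<le> 1\<close>
    by (intro N_between[OF bochner_measurable_add[OF x g]]) (auto elim: eventually_mono)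
  moreover have "x - g \<in> V \<and> 1 - \<epsilon> \<le> N (x - g) \<and> N (x - g) \<le> 1 + \<epsilon>"
    unfolding fun_diff_def using g_ae \<open>0 < \<epsilon>\<close> \<open>\<epsilon> \<le> 1\<close>
    by (intro N_between[OF bochner_measurable_diff[OF x g]]) (auto elim: eventually_mono)
  ultimately show "\<exists>y\<in>V. N y \<le> 1 \<and> 1 - \<epsilon> \<le> N y \<and> \<bar>N (x + y) - 1\<bar> \<le> \<epsilon> \<and> \<bar>N (x - y) - 1\<bar> \<le> \<epsilon>"
    by (auto simp: abs_diff_le_iff)
qed

lemma solid_EX_space:
  fixes E :: "('a \<Rightarrow> real) set"
  assumes "complete_measure M" and K: "kothe_space M E NE"
  shows "solid_bochner_space M (EX_space M E :: ('a \<Rightarrow> 'b::real_normed_vector) set) (EX_norm NE)"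
proof -
  have scal: "\<forall>f\<in>E. \<forall>c::real. (\<lambda>x. c * f x) \<in> E \<and> NE (\<lambda>x. c * f x) = \<bar>c\<bar> * NE f"
    using K unfolding kothe_space_def by (elim conjE) assumption
  have nonneg: "\<forall>f\<in>E. 0 \<le> NE f"
    using K unfolding kothe_space_def by (elim conjE) assumption
  have ideal: "\<forall>f\<in>E. \<forall>g\<in>borel_measurable M. (AE x in M. \<bar>g x\<bar> \<le> \<bar>f x\<bar>) \<longrightarrow> g \<in> E \<and> NE g \<le> NE f"
    using K unfolding kothe_space_def by (elim conjE) assumption
  show ?thesis
  proof (rule solid_bochner_spaceI)
    fix x :: "'a \<Rightarrow> 'b" assume "x \<in> EX_space M E"
    then show "bochner_measurable M x" "0 \<le> EX_norm NE x"
      using nonneg by (simp_all add: EX_space_def EX_norm_def)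
  next
    fix x h :: "'a \<Rightarrow> 'b" and c :: real
    assume x: "x \<in> EX_space M E" and h: "bochner_measurable M h" and "0 \<le> c"
      and ae: "AE t in M. norm (h t) \<le> c * norm (x t)"
    have "(\<lambda>t. norm (x t)) \<in> E" using x by (simp add: EX_space_def)
    from scal[rule_format, OF this, of c]
    have cx: "(\<lambda>t. c * norm (x t)) \<in> E" "NE (\<lambda>t. c * norm (x t)) = c * NE (\<lambda>t. norm (x t))"
      using \<open>0 \<le> c\<close> by simp_all
    have "AE t in M. \<bar>norm (h t)\<bar> \<le> \<bar>c * norm (x t)\<bar>"
      using ae \<open>0 \<le> c\<close> by (auto elim: eventually_mono)
    then have "(\<lambda>t. norm (h t)) \<in> E \<and> NE (\<lambda>t. norm (h t)) \<le> NE (\<lambda>t. c * norm (x t))"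
      using ideal[rule_format, OF cx(1) borel_measurable_norm_bochner[OF assms(1) h]] by blast
    then show "h \<in> EX_space M E \<and> EX_norm NE h \<le> c * EX_norm NE x"
      using h cx(2) by (simp add: EX_space_def EX_norm_def)
  qed
qed

lemma solid_Lp_space:
  assumes "complete_measure M" and "0 < p"
  shows "solid_bochner_space M (Lp_space M p :: ('a \<Rightarrow> 'b::real_normed_vector) set) (Lp_norm M p)"
proof (rule solid_bochner_spaceI)
  fix x :: "'a \<Rightarrow> 'b" assume "x \<in> Lp_space M p"
  then show "bochner_measurable M x" "0 \<le> Lp_norm M p x"
    by (simp_all add: Lp_space_def Lp_norm_def)
next
  fix x h :: "'a \<Rightarrow> 'b" and c :: real
  assume x: "x \<in> Lp_space M p" and h: "bochner_measurable M h" and "0 \<le> c"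
    and ae: "AE t in M. norm (h t) \<le> c * norm (x t)"
  define I where "I = (\<integral>t. norm (x t) powr p \<partial>M)"
  have x_int: "integrable M (\<lambda>t. c powr p * norm (x t) powr p)"
    using x by (simp add: Lp_space_def)
  have h_le: "AE t in M. norm (h t) powr p \<le> c powr p * norm (x t) powr p"
    using ae
  proof eventually_elim
    case (elim t)
    then have "norm (h t) powr p \<le> (c * norm (x t)) powr p"
      using \<open>0 < p\<close> by (intro powr_mono2) auto
    then show ?case using \<open>0 \<le> c\<close> by (simp add: powr_mult)
  qed
  have h_int: "integrable M (\<lambda>t. norm (h t) powr p)"
  proof (rule Bochner_Integration.integrable_bound[OF x_int _ ])
    show "(\<lambda>t. norm (h t) powr p) \<in> borel_measurable M"
      using borel_measurable_norm_bochner[OF assms(1) h] by measurable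
    show "AE t in M. norm (norm (h t) powr p) \<le> norm (c powr p * norm (x t) powr p)"
      using h_le by (auto elim: eventually_mono)
  qed
  have "(\<integral>t. norm (h t) powr p \<partial>M) \<le> c powr p * I"
    using integral_mono_AE[OF h_int x_int h_le] by (simp add: I_def)
  then have "Lp_norm M p h \<le> (c powr p * I) powr (1 / p)"
    unfolding Lp_norm_def using \<open>0 < p\<close> by (intro powr_mono2) (auto intro: integral_nonneg_AE)
  also have "\<dots> = c * Lp_norm M p x"
    using \<open>0 \<le> c\<close> \<open>0 < p\<close> by (simp add: Lp_norm_def I_def powr_mult powr_powr integral_nonneg_AE)
  finally show "h \<in> Lp_space M p \<and> Lp_norm M p h \<le> c * Lp_norm M p x"
    using h h_int by (simp add: Lp_space_def)
qed

section \<open>Essentially bounded functions\<close>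

lemma Linf_norm_le:
  assumes "0 \<le> C" and "AE t in M. norm (h t) \<le> C"
  shows "Linf_norm M h \<le> C"
  unfolding Linf_norm_def using assms by (intro cInf_lower bdd_belowI[of _ 0]) auto

lemma Linf_norm_bound_set_nonempty:
  assumes "\<exists>C. AE t in M. norm (h t) \<le> C"
  shows "{C::real. 0 \<le> C \<and> (AE t in M. norm (h t) \<le> C)} \<noteq> {}"
proof -
  obtain C where "AE t in M. norm (h t) \<le> C" using assms by blast
  then have "AE t in M. norm (h t) \<le> max 0 C" by (auto elim: eventually_mono)
  then have "max 0 C \<in> {C::real. 0 \<le> C \<and> (AE t in M. norm (h t) \<le> C)}" by simp
  then show ?thesis by blast
qed

lemma Linf_norm_nonneg:
  assumes "\<exists>C. AE t in M. norm (h t) \<le> C"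
  shows "0 \<le> Linf_norm M h"
  unfolding Linf_norm_def using Linf_norm_bound_set_nonempty[OF assms] by (intro cInf_greatest) auto

lemma AE_norm_le_Linf_norm:
  assumes "\<exists>C. AE t in M. norm (h t) \<le> C"
  shows "AE t in M. norm (h t) \<le> Linf_norm M h"
proof -
  let ?S = "{C::real. 0 \<le> C \<and> (AE t in M. norm (h t) \<le> C)}"
  have bdd: "bdd_below ?S" by (rule bdd_belowI[of _ 0]) auto
  have "AE t in M. norm (h t) \<le> Linf_norm M h + inverse (real (Suc n))" for n
  proof -
    have "Inf ?S < Linf_norm M h + inverse (real (Suc n))" unfolding Linf_norm_def by simp
    then obtain C where "C \<in> ?S" "C < Linf_norm M h + inverse (real (Suc n))"
      using cInf_less_iff[OF Linf_norm_bound_set_nonempty[OF assms] bdd] by blast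
    then show ?thesis by (auto elim: eventually_mono)
  qed
  then have "AE t in M. \<forall>n. norm (h t) \<le> Linf_norm M h + inverse (real (Suc n))"
    by (simp add: AE_all_countable)
  then show ?thesis
  proof eventually_elim
    case (elim t)
    show ?case
    proof (rule ccontr)
      assume "\<not> norm (h t) \<le> Linf_norm M h"
      then obtain n where "inverse (real (Suc n)) < norm (h t) - Linf_norm M h"
        using reals_Archimedean by (metis diff_gt_0_iff_gt not_le)
      then show False using elim[rule_format, of n] by simp
    qed
  qed
qed

lemma Linf_norm_ge:
  assumes f: "\<exists>C. AE t in M. norm (f t) \<le> C" and h: "\<exists>C. AE t in M. norm (h t) \<le> C"
    and "Linf_norm M f = 1" and "0 < \<delta>"
    and ae: "AE t in M. 1 - \<delta> < norm (f t) \<longrightarrow> c \<le> norm (h t)"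
  shows "c \<le> Linf_norm M h"
proof (rule ccontr)
  assume "\<not> c \<le> Linf_norm M h"
  then have "Linf_norm M h < c" by simp
  have "AE t in M. norm (f t) \<le> max 0 (1 - \<delta>)"
    using ae AE_norm_le_Linf_norm[OF h]
  proof eventually_elim
    case (elim t)
    then show ?case using \<open>Linf_norm M h < c\<close> by (cases "1 - \<delta> < norm (f t)") auto
  qed
  then have "Linf_norm M f \<le> max 0 (1 - \<delta>)" by (intro Linf_norm_le) auto
  then show False using \<open>Linf_norm M f = 1\<close> \<open>0 < \<delta>\<close> by simp
qed

lemma solid_Linf_space:
  assumes "complete_measure M"
  shows "solid_bochner_space M (Linf_space M :: ('a \<Rightarrow> 'b::real_normed_vector) set) (Linf_norm M)"
proof (rule solid_bochner_spaceI)
  fix x :: "'a \<Rightarrow> 'b" assume "x \<in> Linf_space M"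
  then show "bochner_measurable M x" "0 \<le> Linf_norm M x"
    by (simp_all add: Linf_space_def Linf_norm_nonneg)
next
  fix x h :: "'a \<Rightarrow> 'b" and c :: real
  assume x: "x \<in> Linf_space M" and h: "bochner_measurable M h" and "0 \<le> c"
    and ae: "AE t in M. norm (h t) \<le> c * norm (x t)"
  have x_bdd: "\<exists>C. AE t in M. norm (x t) \<le> C" using x by (simp add: Linf_space_def)
  have "AE t in M. norm (h t) \<le> c * Linf_norm M x"
    using ae AE_norm_le_Linf_norm[OF x_bdd]
    by eventually_elim (use \<open>0 \<le> c\<close> in \<open>meson mult_left_mono order_trans\<close>)
  moreover have "0 \<le> c * Linf_norm M x" using \<open>0 \<le> c\<close> Linf_norm_nonneg[OF x_bdd] by simp
  ultimately show "h \<in> Linf_space M \<and> Linf_norm M h \<le> c * Linf_norm M x"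
    using h by (auto simp: Linf_space_def intro: Linf_norm_le)
qed

lemma ex_norm_eq_1_if_Linf_norm_nonzero:
  fixes f :: "'a \<Rightarrow> 'b::real_normed_vector"
  assumes "Linf_norm M f \<noteq> 0"
  obtains e :: 'b where "norm e = 1"
proof -
  have "\<exists>v::'b. v \<noteq> 0"
  proof (rule ccontr)
    assume "\<nexists>v::'b. v \<noteq> 0"
    then have "AE t in M. norm (f t) \<le> 0" by simp
    then have "Linf_norm M f \<le> 0" by (intro Linf_norm_le) simp
    moreover have "0 \<le> Linf_norm M f"
      using \<open>AE t in M. norm (f t) \<le> 0\<close> by (intro Linf_norm_nonneg) blast
    ultimately show False using assms by simp
  qed
  then obtain v :: 'b where "v \<noteq> 0" by blast
  then show thesis by (intro that[of "sgn v"]) (simp add: norm_sgn)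
qed

lemma asq_on_Linf_space:
  fixes M :: "'a measure"
  assumes "complete_measure M" and "sigma_finite_measure M" and A: "ASQ TYPE('b::real_normed_vector)"
  shows "asq_on (Linf_space M :: ('a \<Rightarrow> 'b) set) (Linf_norm M)"
proof (rule asq_onI_approx)
  fix F :: "('a \<Rightarrow> 'b) set" and \<epsilon> :: real
  assume F: "finite F" "F \<noteq> {}" "F \<subseteq> Linf_space M" and F1: "\<forall>x\<in>F. Linf_norm M x = 1"
    and "0 < \<epsilon>" "\<epsilon> \<le> 1"
  have F_bdd: "\<exists>C. AE t in M. norm (j t) \<le> C" and F_bm: "bochner_measurable M j" if "j \<in> F" for j
    using F(3) that by (auto simp: Linf_space_def)
  have F_le1: "AE t in M. norm (j t) \<le> 1" if "j \<in> F" for j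
    using AE_norm_le_Linf_norm[OF F_bdd[OF that]] F1 that by simp
  obtain j0 where "j0 \<in> F" using F(2) by blast
  then obtain e0 :: 'b where "norm e0 = 1"
    using F1 ex_norm_eq_1_if_Linf_norm_nonzero[of M j0] by auto
  define \<delta> where "\<delta> = \<epsilon> / 4"
  have "0 < \<delta>" using \<open>0 < \<epsilon>\<close> by (simp add: \<delta>_def)
  obtain g where g: "bochner_measurable M g"
    and g_ae: "AE t in M. norm (g t) \<le> 1 \<and> 1 - \<delta> \<le> norm (g t) \<and>
      (\<forall>j\<in>F. norm (j t) \<le> 1 \<longrightarrow> norm (j t + g t) \<le> 1 + \<delta> + 2 * \<delta> \<and>
        (1 - \<delta> \<le> norm (j t) \<longrightarrow> 1 - \<delta> - 3 * \<delta> \<le> norm (j t + g t)))"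
    by (rule ASQ_measurable_witness[OF assms(1,2) A F(1) F_bm \<open>norm e0 = 1\<close> \<open>0 < \<delta>\<close> \<open>0 < \<delta>\<close>]) blast
  have g_bdd: "\<exists>C. AE t in M. norm (g t) \<le> C" using g_ae by (auto elim: eventually_mono)
  have "Linf_norm M g \<le> 1" using g_ae by (intro Linf_norm_le) (auto elim: eventually_mono)
  moreover have "1 - \<delta> \<le> Linf_norm M g"
    using g_ae F1 \<open>j0 \<in> F\<close>
    by (intro Linf_norm_ge[OF F_bdd[OF \<open>j0 \<in> F\<close>] g_bdd, of 1]) (auto elim: eventually_mono)
  moreover have "\<bar>Linf_norm M (x + g) - 1\<bar> \<le> \<epsilon>" if "x \<in> F" for x
  proof -
    have ae: "AE t in M. norm (x t + g t) \<le> 1 + 3 * \<delta> \<and>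
        (1 - \<delta> < norm (x t) \<longrightarrow> 1 - 4 * \<delta> \<le> norm (x t + g t))"
      using g_ae F_le1[OF that]
    proof eventually_elim
      case (elim t)
      then show ?case using \<open>x \<in> F\<close> by auto
    qed
    then have "Linf_norm M (\<lambda>t. x t + g t) \<le> 1 + 3 * \<delta>"
      using \<open>0 < \<delta>\<close> by (intro Linf_norm_le) (auto elim: eventually_mono)
    moreover have "1 - 4 * \<delta> \<le> Linf_norm M (\<lambda>t. x t + g t)"
      using ae F1 that \<open>0 < \<delta>\<close>
      by (intro Linf_norm_ge[OF F_bdd[OF that], of _ \<delta>]) (auto elim: eventually_mono)
    ultimately show ?thesis by (simp add: plus_fun_def \<delta>_def abs_diff_le_iff)
  qed
  moreover have "g \<in> Linf_space M" using g g_bdd by (simp add: Linf_space_def)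
  ultimately show "\<exists>y\<in>Linf_space M. Linf_norm M y \<le> 1 \<and> 1 - \<epsilon> \<le> Linf_norm M y \<and>
      (\<forall>x\<in>F. \<bar>Linf_norm M (x + y) - 1\<bar> \<le> \<epsilon>)"
    using \<open>0 < \<epsilon>\<close> by (intro bexI[of _ g]) (auto simp: \<delta>_def)
qed

theorem theorem4p5:
  fixes M :: "'a measure"
  assumes "complete_measure M"
    and "sigma_finite_measure M"
  shows "(\<forall>(E::('a \<Rightarrow> real) set) NE.
            kothe_space M E NE \<and> LASQ TYPE('b::banach) \<and> simple_dense M E NE TYPE('b)
            \<longrightarrow> lasq_on (EX_space M E :: ('a \<Rightarrow> 'b) set) (EX_norm NE))
       \<and> (\<forall>p::real. 1 \<le> p \<and> LASQ TYPE('b)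
            \<longrightarrow> lasq_on (Lp_space M p :: ('a \<Rightarrow> 'b) set) (Lp_norm M p))
       \<and> (ASQ TYPE('b) \<longrightarrow> asq_on (Linf_space M :: ('a \<Rightarrow> 'b) set) (Linf_norm M))
       \<and> (LASQ TYPE('b) \<longrightarrow> lasq_on (Linf_space M :: ('a \<Rightarrow> 'b) set) (Linf_norm M))"
proof (intro conjI allI impI)
  fix E :: "('a \<Rightarrow> real) set" and NE
  assume "kothe_space M E NE \<and> LASQ TYPE('b) \<and> simple_dense M E NE TYPE('b)"
  then show "lasq_on (EX_space M E :: ('a \<Rightarrow> 'b) set) (EX_norm NE)"
    using lasq_on_solid_bochner_space[OF assms(1) _ solid_EX_space[OF assms(1)]] by blast
next
  fix p :: real
  assume "1 \<le> p \<and> LASQ TYPE('b)"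
  then have "0 < p" and "LASQ TYPE('b)" by simp_all
  then show "lasq_on (Lp_space M p :: ('a \<Rightarrow> 'b) set) (Lp_norm M p)"
    using lasq_on_solid_bochner_space[OF assms(1) _ solid_Lp_space[OF assms(1)]] by blast
next
  assume "ASQ TYPE('b)"
  then show "asq_on (Linf_space M :: ('a \<Rightarrow> 'b) set) (Linf_norm M)"
    by (rule asq_on_Linf_space[OF assms])
next
  assume "LASQ TYPE('b)"
  then show "lasq_on (Linf_space M :: ('a \<Rightarrow> 'b) set) (Linf_norm M)"
    by (rule lasq_on_solid_bochner_space[OF assms(1) _ solid_Linf_space[OF assms(1)]])
qed

end
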